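(* Let $N\in\mathbb{N}$, $N\geqslant2$, and let $f:[0,1]\times\mathbb{R}\to\mathbb{R}$ be such that there exist positive constants $A,B$ with $A<1$ and $|f(t,x)|\leqslant A|x|+B$ for all $t\in[0,1]$, $x\in\mathbb{R}$. Then the functional $\mathbb{E}_N\ni x\mapsto\|D_Nx\|_N$ is coercive with respect to $\|\cdot\|_{\mathbb{E}_N}$, i.e. $\|D_Nx\|_N\to\infty$ as $\|x\|_{\mathbb{E}_N}\to\infty$.
   Context: $\mathbb{E}_N$ is the space of $x:\{0,\dots,N\}\to\mathbb{R}$ with $x(0)=x(N)=0$. $\Delta x(k-1)=x(k)-x(k-1)$, $\Delta^2x(k-1)=x(k+1)-2x(k)+x(k-1)$. $\|x\|_N=(\sum_{i=1}^{N-1}|x(i)|^2)^{1/2}$, $\|x\|_{\mathbb{E}_N}=(\sum_{i=1}^{N-1}|\Delta^2x(i-1)|^2)^{1/2}$. $(D_Nx)(k)=\Delta^2x(k-1)-\frac{1}{N^2}f(\frac kN,x(k))$ for $k=1,\dots,N-1$, $(D_Nx)(0)=(D_Nx)(N)=0$. *)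

theory Defs
  imports "HOL-Analysis.Analysis"
begin

text \<open>The space E_N: functions on {0..N} (represented as nat => real; values
  outside {0..N} are irrelevant) vanishing at 0 and N.\<close>
definition EN :: "nat \<Rightarrow> (nat \<Rightarrow> real) set" where
  "EN N = {x. x 0 = 0 \<and> x N = 0}"

text \<open>Second difference: diff2 x (k-1) = x(k+1) - 2 x(k) + x(k-1); we index by k.\<close>
definition diff2 :: "(nat \<Rightarrow> real) \<Rightarrow> nat \<Rightarrow> real" where
  "diff2 x k = x (k + 1) - 2 * x k + x (k - 1)"

definition normN :: "nat \<Rightarrow> (nat \<Rightarrow> real) \<Rightarrow> real" where
  "normN N x = sqrt (\<Sum>i = 1..N - 1. (x i)\<^sup>2)"

definition normEN :: "nat \<Rightarrow> (nat \<Rightarrow> real) \<Rightarrow> real" where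
  "normEN N x = sqrt (\<Sum>i = 1..N - 1. (diff2 x i)\<^sup>2)"

definition DN :: "nat \<Rightarrow> (real \<Rightarrow> real \<Rightarrow> real) \<Rightarrow> (nat \<Rightarrow> real) \<Rightarrow> nat \<Rightarrow> real" where
  "DN N f x k = (if 1 \<le> k \<and> k \<le> N - 1
      then diff2 x k - 1 / (real N)\<^sup>2 * f (real k / real N) (x k) else 0)"

end

theory Submission imports Defs begin

text \<open>For x vanishing at 0 and N the first differences x(j) - x(j-1) sum to zero and
  oscillate by at most S, the l1-norm of the second differences; hence each of them is at
  most S and each |x(k)| at most N S, which by Cauchy-Schwarz gives
  \<open>\<parallel>x\<parallel>\<^sub>N \<le> N (N - 1) \<parallel>x\<parallel>\<^sub>E\<^sub>N\<close>. Through the growth bound on f the nonlinear part of D_N x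
  then has norm at most \<open>A (N - 1) / N \<parallel>x\<parallel>\<^sub>E\<^sub>N\<close> plus a constant, and A (N - 1) / N < 1
  leaves a positive multiple of \<open>\<parallel>x\<parallel>\<^sub>E\<^sub>N\<close> in the triangle inequality.\<close>

lemma normN_eq_L2_set: "normN N x = L2_set x {1..N-1}"
  by (simp add: normN_def L2_set_def)

lemma normEN_eq_L2_set: "normEN N x = L2_set (diff2 x) {1..N-1}"
  by (simp add: normEN_def L2_set_def)

lemma L2_set_mono_abs:
  assumes "\<And>i. i \<in> K \<Longrightarrow> \<bar>f i\<bar> \<le> g i"
  shows "L2_set f K \<le> L2_set g K"
proof -
  have "L2_set f K = L2_set (\<lambda>i. \<bar>f i\<bar>) K" unfolding L2_set_def by simp
  also have "\<dots> \<le> L2_set g K" by (rule L2_set_mono) (use assms in auto)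
  finally show ?thesis .
qed

lemma L2_set_constant_atLeastAtMost:
  "L2_set (\<lambda>_. c) {1..N-1} = \<bar>c\<bar> * sqrt (real N - 1)" if "N \<ge> 1"
  using that by (simp add: L2_set_constant of_nat_diff real_sqrt_mult)

lemma abs_le_of_sum_eq_zero:
  fixes d :: "'a \<Rightarrow> real"
  assumes "finite K" "sum d K = 0" "i \<in> K"
    and osc: "\<And>j k. j \<in> K \<Longrightarrow> k \<in> K \<Longrightarrow> \<bar>d k - d j\<bar> \<le> S"
  shows "\<bar>d i\<bar> \<le> S"
proof -
  have "real (card K) * d i = (\<Sum>j\<in>K. d i - d j)"
    using assms(2) by (simp add: sum_subtractf)
  also have "\<bar>\<dots>\<bar> \<le> (\<Sum>j\<in>K. \<bar>d i - d j\<bar>)" by (rule sum_abs)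
  also have "\<dots> \<le> real (card K) * S"
    using sum_mono[of K "\<lambda>j. \<bar>d i - d j\<bar>" "\<lambda>_. S"] osc assms(3) by (simp add: abs_minus_commute)
  finally have "real (card K) * \<bar>d i\<bar> \<le> real (card K) * S" by (simp add: abs_mult)
  moreover have "card K > 0" using assms(1,3) card_gt_0_iff by blast
  ultimately show ?thesis by simp
qed

lemma sum_first_diff: "(\<Sum>j=1..n. x j - x (j - 1)) = x n - (x 0 :: real)" for n :: nat
  by (induction n) auto

lemma first_diff_diff_eq_sum_diff2:
  fixes x :: "nat \<Rightarrow> real"
  assumes "j \<le> k"
  shows "(x k - x (k - 1)) - (x j - x (j - 1)) = (\<Sum>i\<in>{j..<k}. diff2 x i)"
  using assms
proof (induction k rule: dec_induct)
  case base then show ?case by simp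
next
  case (step k)
  have "diff2 x k = (x (Suc k) - x k) - (x k - x (k - 1))" unfolding diff2_def by simp
  with step show ?case by simp
qed

lemma abs_first_diff_le:
  fixes x :: "nat \<Rightarrow> real"
  assumes "x \<in> EN N" "i \<in> {1..N}"
  shows "\<bar>x i - x (i - 1)\<bar> \<le> (\<Sum>k=1..N-1. \<bar>diff2 x k\<bar>)"
proof (rule abs_le_of_sum_eq_zero[where K = "{1..N}" and d = "\<lambda>j. x j - x (j - 1)"])
  show "(\<Sum>j=1..N. x j - x (j - 1)) = 0"
    using assms(1) sum_first_diff[of x N] by (simp add: EN_def)
  have osc: "\<bar>(x b - x (b - 1)) - (x a - x (a - 1))\<bar> \<le> (\<Sum>k=1..N-1. \<bar>diff2 x k\<bar>)"
    if "1 \<le> a" "a \<le> b" "b \<le> N" for a b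
  proof -
    have "\<bar>(x b - x (b - 1)) - (x a - x (a - 1))\<bar> \<le> (\<Sum>k\<in>{a..<b}. \<bar>diff2 x k\<bar>)"
      unfolding first_diff_diff_eq_sum_diff2[OF that(2)] by (rule sum_abs)
    also have "\<dots> \<le> (\<Sum>k=1..N-1. \<bar>diff2 x k\<bar>)"
      by (rule sum_mono2) (use that in auto)
    finally show ?thesis .
  qed
  show "\<bar>(x k - x (k - 1)) - (x j - x (j - 1))\<bar> \<le> (\<Sum>k=1..N-1. \<bar>diff2 x k\<bar>)"
    if "j \<in> {1..N}" "k \<in> {1..N}" for j k
    using osc[of j k] osc[of k j] that by (cases "j \<le> k") (auto simp: abs_minus_commute)
qed (use assms in auto)

lemma abs_le_sum_abs_diff2:
  fixes x :: "nat \<Rightarrow> real"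
  assumes "x \<in> EN N" "k \<le> N"
  shows "\<bar>x k\<bar> \<le> real N * (\<Sum>i=1..N-1. \<bar>diff2 x i\<bar>)"
proof -
  let ?S = "\<Sum>i=1..N-1. \<bar>diff2 x i\<bar>"
  have "x k = (\<Sum>j=1..k. x j - x (j - 1))"
    using assms(1) sum_first_diff[of x k] by (simp add: EN_def)
  then have "\<bar>x k\<bar> \<le> (\<Sum>j=1..k. \<bar>x j - x (j - 1)\<bar>)" by (simp add: sum_abs)
  also have "\<dots> \<le> real k * ?S"
    using sum_mono[of "{1..k}" "\<lambda>j. \<bar>x j - x (j - 1)\<bar>" "\<lambda>_. ?S"] abs_first_diff_le[OF assms(1)] assms(2)
    by auto
  also have "\<dots> \<le> real N * ?S"
    using assms(2) by (intro mult_right_mono) (auto simp: sum_nonneg)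
  finally show ?thesis .
qed

lemma normN_le_normEN:
  assumes "x \<in> EN N" "N \<ge> 1"
  shows "normN N x \<le> real N * (real N - 1) * normEN N x"
proof -
  let ?I = "{1..N-1}"
  define S where "S = (\<Sum>i\<in>?I. \<bar>diff2 x i\<bar>)"
  have "S \<le> L2_set (diff2 x) ?I * L2_set (\<lambda>_. 1) ?I"
    using L2_set_mult_ineq[of "diff2 x" "\<lambda>_. 1" ?I] unfolding S_def by simp
  then have S_le: "S \<le> sqrt (real N - 1) * normEN N x"
    using assms(2) L2_set_constant_atLeastAtMost[of N 1] by (simp add: normEN_eq_L2_set mult.commute)
  have "normN N x \<le> L2_set (\<lambda>_. real N * S) ?I"
    unfolding normN_eq_L2_set S_def
    by (rule L2_set_mono_abs) (use abs_le_sum_abs_diff2[OF assms(1)] in auto)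
  also have "\<dots> = sqrt (real N - 1) * (real N * S)"
    using assms(2) L2_set_constant_atLeastAtMost[of N "real N * S"]
    by (simp add: S_def sum_nonneg)
  also have "\<dots> \<le> sqrt (real N - 1) * (real N * (sqrt (real N - 1) * normEN N x))"
    using S_le assms(2) by (intro mult_left_mono) auto
  also have "\<dots> = real N * (real N - 1) * normEN N x"
    using assms(2) by (simp add: algebra_simps)
  finally show ?thesis .
qed

lemma normN_DN_lower_bound:
  fixes f :: "real \<Rightarrow> real \<Rightarrow> real"
  assumes "x \<in> EN N" "N \<ge> 1" "A \<ge> 0"
    and growth: "\<And>t y. t \<in> {0..1} \<Longrightarrow> \<bar>f t y\<bar> \<le> A * \<bar>y\<bar> + B"
  shows "(1 - A * (real N - 1) / real N) * normEN N x - B * sqrt (real N - 1) / (real N)\<^sup>2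
           \<le> normN N (DN N f x)"
proof -
  let ?I = "{1..N-1}"
  define g where "g i = 1 / (real N)\<^sup>2 * f (real i / real N) (x i)" for i
  have N_pos: "real N > 0" using assms(2) by simp
  have B_nonneg: "B \<ge> 0" using growth[of 0 0] by simp
  have DN_eq: "normN N (DN N f x) = L2_set (\<lambda>i. diff2 x i - g i) ?I"
    unfolding normN_def L2_set_def
    by (intro arg_cong[where f=sqrt] sum.cong) (auto simp: DN_def g_def)
  have "L2_set g ?I \<le> L2_set (\<lambda>i. (A * \<bar>x i\<bar> + B) / (real N)\<^sup>2) ?I"
  proof (rule L2_set_mono_abs)
    fix i assume "i \<in> ?I"
    then have "real i / real N \<in> {0..1}" using N_pos by (auto simp: field_simps)
    from growth[OF this, of "x i"] show "\<bar>g i\<bar> \<le> (A * \<bar>x i\<bar> + B) / (real N)\<^sup>2"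
      unfolding g_def by (simp add: abs_mult divide_right_mono)
  qed
  also have "\<dots> = L2_set (\<lambda>i. A * \<bar>x i\<bar> + B) ?I / (real N)\<^sup>2"
    using L2_set_left_distrib[of "1 / (real N)\<^sup>2" "\<lambda>i. A * \<bar>x i\<bar> + B" ?I]
    by (simp add: divide_inverse)
  also have "\<dots> \<le> (L2_set (\<lambda>i. A * \<bar>x i\<bar>) ?I + L2_set (\<lambda>_. B) ?I) / (real N)\<^sup>2"
    by (intro divide_right_mono L2_set_triangle_ineq) simp
  also have "\<dots> \<le> (A * (real N * (real N - 1) * normEN N x) + B * sqrt (real N - 1)) / (real N)\<^sup>2"
  proof -
    have "L2_set (\<lambda>i. A * \<bar>x i\<bar>) ?I = A * normN N x"
      using L2_set_right_distrib[of A "\<lambda>i. \<bar>x i\<bar>" ?I] assms(3)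
      by (simp add: L2_set_def normN_eq_L2_set)
    also have "\<dots> \<le> A * (real N * (real N - 1) * normEN N x)"
      using normN_le_normEN[OF assms(1,2)] assms(3) by (rule mult_left_mono)
    finally show ?thesis
      using assms(2) L2_set_constant_atLeastAtMost[of N B] B_nonneg
      by (intro divide_right_mono) auto
  qed
  also have "\<dots> = A * (real N - 1) / real N * normEN N x + B * sqrt (real N - 1) / (real N)\<^sup>2"
    using N_pos by (simp add: field_simps power2_eq_square)
  finally have g_le: "L2_set g ?I \<le> \<dots>" .
  have "normEN N x \<le> normN N (DN N f x) + L2_set g ?I"
    using L2_set_triangle_ineq[of "\<lambda>i. diff2 x i - g i" g ?I]
    by (simp add: DN_eq normEN_eq_L2_set)
  with g_le show ?thesis by (simp add: algebra_simps)
qed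

theorem lemma11:
  fixes N :: nat and f :: "real \<Rightarrow> real \<Rightarrow> real" and A B :: real
  assumes "N \<ge> 2"
    and "A > 0" and "B > 0" and "A < 1"
    and "\<And>t x. t \<in> {0..1} \<Longrightarrow> \<bar>f t x\<bar> \<le> A * \<bar>x\<bar> + B"
  shows "\<forall>M. \<exists>R. \<forall>x \<in> EN N. normEN N x > R \<longrightarrow> normN N (DN N f x) > M"
proof
  fix M :: real
  define c where "c = 1 - A * (real N - 1) / real N"
  define C where "C = B * sqrt (real N - 1) / (real N)\<^sup>2"
  have "A * (real N - 1) \<le> real N - 1"
    using assms(1,2,4) by (intro mult_left_le_one_le) auto
  then have "A * (real N - 1) < real N" by simp
  then have c_pos: "c > 0"
    using assms(1) by (simp add: c_def divide_less_eq)
  show "\<exists>R. \<forall>x \<in> EN N. normEN N x > R \<longrightarrow> normN N (DN N f x) > M"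
  proof (intro exI ballI impI)
    fix x assume "x \<in> EN N" and "normEN N x > (\<bar>M\<bar> + C) / c"
    then have "c * normEN N x > \<bar>M\<bar> + C"
      using c_pos by (simp add: field_simps)
    moreover have "c * normEN N x - C \<le> normN N (DN N f x)"
      unfolding c_def C_def
      using normN_DN_lower_bound[OF \<open>x \<in> EN N\<close> _ _ assms(5)] assms(1,2) by simp
    ultimately show "normN N (DN N f x) > M" by linarith
  qed
qed

end
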